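(* Let $\beta=\beta_n\ge0$ with $n\log(n)\beta_n\to0$, and let $(\lambda_1,\dots,\lambda_n)$ have law $P_{n,\beta}(\mathrm{d}\lambda)=\frac{1}{Z_{n,\beta}}\exp(-\frac12\sum_i\lambda_i^2)\prod_{i<j}|\lambda_i-\lambda_j|^\beta\prod_i\mathrm{d}\lambda_i$. Let $\delta_n\to\delta>0$, $a_n=\delta_n\sqrt{2\log n}$, $b_n=\sqrt{2\log n}-\frac{\log\log n+2\log\delta_n+\log(4\pi)}{2\sqrt{2\log n}}$, and $\mu=e^{-x/\delta}\,\mathrm{d}x$. Let $\rho_n$ be the density of $(a_n(\lambda_i-b_n))_{1\le i\le n}$ with respect to $\mu^{\otimes n}$ and $R^n_k(x_1,\dots,x_k)=\frac{n!}{(n-k)!}\int_{\mathbb{R}^{n-k}}\rho_n(x_1,\dots,x_n)\,\mathrm{d}\mu^{\otimes(n-k)}(x_{k+1},\dots,x_n)$ for $1\le k\le n$. Let $K\subset\mathbb{R}$ be compact. Then there exists $\Theta_K>0$ such that for all $n$ large enough, all integers $1\le k\le n$ and all $(x_1,\dots,x_k)\in K^k$, $$R^n_k(x_1,\dots,x_k)\le\Theta_K^k.$$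
   Context: $Z_{n,\beta}$ is the normalizing constant of $P_{n,\beta}$. *)

theory Defs
  imports "HOL-Analysis.Analysis"
begin

text \<open>Power |x|^b with the convention 0^0 = 1 (Isabelle's powr has 0 powr 0 = 0).\<close>
definition abspow :: "real \<Rightarrow> real \<Rightarrow> real" where
  "abspow x b = (if b = 0 then 1 else \<bar>x\<bar> powr b)"

definition beta_weight :: "nat \<Rightarrow> real \<Rightarrow> (nat \<Rightarrow> real) \<Rightarrow> real" where
  "beta_weight n \<beta> l =
     exp (- (1/2) * (\<Sum>i<n. (l i)\<^sup>2)) *
     (\<Prod>i<n. \<Prod>j\<in>{i<..<n}. abspow (l i - l j) \<beta>)"

definition Zconst :: "nat \<Rightarrow> real \<Rightarrow> ennreal" where
  "Zconst n \<beta> = (\<integral>\<^sup>+ l. ennreal (beta_weight n \<beta> l) \<partial>(\<Pi>\<^sub>M i\<in>{..<n}. lborel))"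

definition a_seq :: "(nat \<Rightarrow> real) \<Rightarrow> nat \<Rightarrow> real" where
  "a_seq ds n = ds n * sqrt (2 * ln (real n))"

definition b_seq :: "(nat \<Rightarrow> real) \<Rightarrow> nat \<Rightarrow> real" where
  "b_seq ds n = sqrt (2 * ln (real n))
     - (ln (ln (real n)) + 2 * ln (ds n) + ln (4 * pi)) / (2 * sqrt (2 * ln (real n)))"

definition mu_ref :: "real \<Rightarrow> real measure" where
  "mu_ref \<delta> = density lborel (\<lambda>t. ennreal (exp (- t / \<delta>)))"

text \<open>Density rho_n of (a(lambda_i - b))_i w.r.t. mu^{\<otimes>n} (the continuous version
  obtained by change of variables lambda_i = b + x_i / a).\<close>
definition rho :: "nat \<Rightarrow> real \<Rightarrow> real \<Rightarrow> real \<Rightarrow> real \<Rightarrow> (nat \<Rightarrow> real) \<Rightarrow> ennreal" where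
  "rho n \<beta> a b \<delta> x =
     ennreal (beta_weight n \<beta> (\<lambda>i. b + x i / a) * (\<Prod>i<n. exp (x i / \<delta>)) / a ^ n)
     / Zconst n \<beta>"

text \<open>k-point correlation function R^n_k; x gives the first k coordinates (indices 0..k-1),
  the remaining coordinates k..n-1 are integrated against mu^{\<otimes>(n-k)}.\<close>
definition corr :: "nat \<Rightarrow> nat \<Rightarrow> real \<Rightarrow> real \<Rightarrow> real \<Rightarrow> real \<Rightarrow> (nat \<Rightarrow> real) \<Rightarrow> ennreal" where
  "corr n k \<beta> a b \<delta> x =
     ennreal (fact n / fact (n - k)) *
     (\<integral>\<^sup>+ y. rho n \<beta> a b \<delta> (\<lambda>i. if i < k then x i else y i)
        \<partial>(\<Pi>\<^sub>M i\<in>{k..<n}. mu_ref \<delta>))"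

end

(*
  After the change of variables lambda_i = b_n + x_i / a_n, the k-point function is n!/(n-k)! times
  the ensemble weight with its first k points frozen, integrated over the other n - k points and
  divided by Z_{n,beta}.

  Integrating out the points of Z_{n,beta} one at a time, each contributes at least
  c_n = e^{-1/2} (2n)^{-beta n}: off the intervals of radius 1/(2n) around the other points, a set
  of measure at least 1 in [-1,1] remains, where every factor |u - lambda_j|^beta is at least
  (2n)^{-beta}. Hence Z_{n,beta} >= c_n^k Z_{n-k,beta}, and c_n >= e^{-3/2} once beta n log n is small.

  In the numerator, a frozen point t and a free point y interact by at most exp (beta (|t| + |y|)).
  The resulting tilt exp (beta k sum |y_j|) of the free Gaussian is removed by completing the square
  with eta = k/(2n) and rescaling by sqrt (1 - eta); this costs e^{2k} and leaves Z_{n-k,beta}.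
  What remains for each frozen point is, up to e^{O(1)}, n e^{x/delta} phi(b_n + x/a_n) / a_n, which
  is bounded on compacts because b_n is chosen with n phi(b_n) <= a_n.
*)

theory Submission
  imports Defs "HOL-Real_Asymp.Real_Asymp"
begin

section \<open>Integrals over finite products of the real line\<close>

interpretation lborel_product: product_sigma_finite "\<lambda>_::nat. lborel :: real measure"
  by (simp add: product_sigma_finite_def lborel.sigma_finite_measure_axioms)

lemma nn_integral_PiM_lborel_affine:
  fixes f :: "(nat \<Rightarrow> real) \<Rightarrow> ennreal"
  assumes "finite I" "c \<noteq> 0" "f \<in> borel_measurable (\<Pi>\<^sub>M i\<in>I. lborel)"
  shows "(\<integral>\<^sup>+x. f (\<lambda>i\<in>I. t + c * x i) \<partial>(\<Pi>\<^sub>M i\<in>I. lborel)) =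
         ennreal ((1 / \<bar>c\<bar>) ^ card I) * (\<integral>\<^sup>+x. f x \<partial>(\<Pi>\<^sub>M i\<in>I. lborel))"
  using assms(1,3)
proof (induction I arbitrary: f rule: finite_induct)
  case empty
  then show ?case by (simp add: PiM_empty restrict_def nn_integral_count_space_finite)
next
  case (insert j I)
  note [measurable] = insert.prems
  define F where "F z = (\<integral>\<^sup>+y. f (z(j := y)) \<partial>lborel)" for z
  have [measurable]: "F \<in> borel_measurable (\<Pi>\<^sub>M i\<in>I. lborel)"
    unfolding F_def by measurable
  have "(\<integral>\<^sup>+x. f (\<lambda>i\<in>insert j I. t + c * x i) \<partial>(\<Pi>\<^sub>M i\<in>insert j I. lborel))
      = (\<integral>\<^sup>+x. (\<integral>\<^sup>+y. f (\<lambda>i\<in>insert j I. t + c * (x(j := y)) i) \<partial>lborel) \<partial>(\<Pi>\<^sub>M i\<in>I. lborel))"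
    by (rule lborel_product.product_nn_integral_insert) (use insert in auto)
  also have "\<dots> = (\<integral>\<^sup>+x. (\<integral>\<^sup>+y. f ((\<lambda>i\<in>I. t + c * x i)(j := t + c * y)) \<partial>lborel) \<partial>(\<Pi>\<^sub>M i\<in>I. lborel))"
    using insert(2) by (intro nn_integral_cong arg_cong[where f=f]) (auto simp: fun_eq_iff)
  also have "\<dots> = (\<integral>\<^sup>+x. ennreal (1 / \<bar>c\<bar>) * F (\<lambda>i\<in>I. t + c * x i) \<partial>(\<Pi>\<^sub>M i\<in>I. lborel))"
  proof (intro nn_integral_cong)
    fix x :: "nat \<Rightarrow> real"
    let ?z = "\<lambda>i\<in>I. t + c * x i"
    have "(\<lambda>y. f (?z(j := y))) \<in> borel_measurable borel" by measurable
    from nn_integral_real_affine[OF this \<open>c \<noteq> 0\<close>, of t] \<open>c \<noteq> 0\<close>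
    show "(\<integral>\<^sup>+y. f (?z(j := t + c * y)) \<partial>lborel) = ennreal (1 / \<bar>c\<bar>) * F ?z"
      unfolding F_def by (simp add: ennreal_mult'[symmetric] mult.assoc[symmetric] divide_simps flip: ennreal_mult)
  qed
  also have "\<dots> = ennreal (1 / \<bar>c\<bar>) * (\<integral>\<^sup>+x. F (\<lambda>i\<in>I. t + c * x i) \<partial>(\<Pi>\<^sub>M i\<in>I. lborel))"
    by (rule nn_integral_cmult) measurable
  also have "(\<integral>\<^sup>+x. F (\<lambda>i\<in>I. t + c * x i) \<partial>(\<Pi>\<^sub>M i\<in>I. lborel))
      = ennreal ((1 / \<bar>c\<bar>) ^ card I) * (\<integral>\<^sup>+x. F x \<partial>(\<Pi>\<^sub>M i\<in>I. lborel))"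
    by (rule insert.IH) measurable
  also have "(\<integral>\<^sup>+x. F x \<partial>(\<Pi>\<^sub>M i\<in>I. lborel)) = (\<integral>\<^sup>+x. f x \<partial>(\<Pi>\<^sub>M i\<in>insert j I. lborel))"
    unfolding F_def by (rule lborel_product.product_nn_integral_insert[symmetric]) (use insert in auto)
  finally show ?case
    using insert(1,2) by (simp add: mult.assoc[symmetric] flip: ennreal_mult)
qed

lemma nn_integral_PiM_density:
  fixes h :: "real \<Rightarrow> real" and f :: "(nat \<Rightarrow> real) \<Rightarrow> ennreal"
  assumes [measurable]: "h \<in> borel_measurable borel"
    and "finite I" and "f \<in> borel_measurable (\<Pi>\<^sub>M i\<in>I. lborel)"
  shows "(\<integral>\<^sup>+y. f y \<partial>(\<Pi>\<^sub>M i\<in>I. density lborel (\<lambda>t. ennreal (h t)))) =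
         (\<integral>\<^sup>+y. f y * (\<Prod>i\<in>I. ennreal (h (y i))) \<partial>(\<Pi>\<^sub>M i\<in>I. lborel))"
  using assms(2,3)
proof (induction I arbitrary: f rule: finite_induct)
  case empty
  then show ?case by (simp add: PiM_empty nn_integral_count_space_finite)
next
  case (insert j I)
  let ?D = "density lborel (\<lambda>t. ennreal (h t))"
  have "sigma_finite_measure ?D"
    by (subst sigma_finite_measure.sigma_finite_iff_density_finite'[OF lborel.sigma_finite_measure_axioms]) auto
  then interpret D: product_sigma_finite "\<lambda>_::nat. ?D"
    by (simp add: product_sigma_finite_def)
  note [measurable] = insert.prems
  have sets_eq: "sets (\<Pi>\<^sub>M i\<in>J. ?D) = sets (\<Pi>\<^sub>M i\<in>J. lborel)" for J
    by (intro sets_PiM_cong) auto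
  define G where "G x = (\<integral>\<^sup>+y. f (x(j := y)) * ennreal (h y) \<partial>lborel)" for x
  have [measurable]: "G \<in> borel_measurable (\<Pi>\<^sub>M i\<in>I. lborel)"
    unfolding G_def by measurable
  have "(\<integral>\<^sup>+y. f y \<partial>(\<Pi>\<^sub>M i\<in>insert j I. ?D)) = (\<integral>\<^sup>+x. (\<integral>\<^sup>+y. f (x(j := y)) \<partial>?D) \<partial>(\<Pi>\<^sub>M i\<in>I. ?D))"
    by (rule D.product_nn_integral_insert) (use insert in \<open>auto simp: measurable_cong_sets[OF sets_eq refl]\<close>)
  also have "\<dots> = (\<integral>\<^sup>+x. G x \<partial>(\<Pi>\<^sub>M i\<in>I. ?D))"
  proof (intro nn_integral_cong)
    fix x assume "x \<in> space (\<Pi>\<^sub>M i\<in>I. ?D)"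
    then have "x \<in> space (\<Pi>\<^sub>M i\<in>I. lborel)" by (simp add: space_PiM)
    then have "(\<lambda>y. f (x(j := y))) \<in> borel_measurable lborel" by measurable
    then show "(\<integral>\<^sup>+y. f (x(j := y)) \<partial>?D) = G x"
      unfolding G_def by (subst nn_integral_density) (auto simp: mult.commute)
  qed
  also have "\<dots> = (\<integral>\<^sup>+x. G x * (\<Prod>i\<in>I. ennreal (h (x i))) \<partial>(\<Pi>\<^sub>M i\<in>I. lborel))"
    by (rule insert.IH) measurable
  also have "\<dots> = (\<integral>\<^sup>+x. (\<integral>\<^sup>+y. f (x(j := y)) * (\<Prod>i\<in>insert j I. ennreal (h ((x(j := y)) i))) \<partial>lborel)
                      \<partial>(\<Pi>\<^sub>M i\<in>I. lborel))"
  proof (intro nn_integral_cong)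
    fix x assume x: "x \<in> space (\<Pi>\<^sub>M i\<in>I. lborel :: real measure)"
    have "(\<integral>\<^sup>+y. f (x(j := y)) * (\<Prod>i\<in>insert j I. ennreal (h ((x(j := y)) i))) \<partial>lborel)
        = (\<integral>\<^sup>+y. (f (x(j := y)) * ennreal (h y)) * (\<Prod>i\<in>I. ennreal (h (x i))) \<partial>lborel)"
      using insert(1,2) by (intro nn_integral_cong) (auto simp: mult_ac intro!: arg_cong2[where f="(*)"] prod.cong)
    also have "\<dots> = G x * (\<Prod>i\<in>I. ennreal (h (x i)))"
      unfolding G_def by (rule nn_integral_multc) (use x in measurable)
    finally show "G x * (\<Prod>i\<in>I. ennreal (h (x i))) =
        (\<integral>\<^sup>+y. f (x(j := y)) * (\<Prod>i\<in>insert j I. ennreal (h ((x(j := y)) i))) \<partial>lborel)" ..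
  qed
  also have "\<dots> = (\<integral>\<^sup>+y. f y * (\<Prod>i\<in>insert j I. ennreal (h (y i))) \<partial>(\<Pi>\<^sub>M i\<in>insert j I. lborel))"
    by (rule lborel_product.product_nn_integral_insert[symmetric]) (use insert in auto)
  finally show ?case .
qed

section \<open>Lower bound for the partition function\<close>

lemma abspow_nonneg: "abspow x b \<ge> 0"
  by (simp add: abspow_def)

lemma abspow_le_exp_abs:
  assumes "b \<ge> 0"
  shows "abspow x b \<le> exp (b * \<bar>x\<bar>)"
proof (cases "b = 0 \<or> x = 0")
  case False
  then have "b * ln \<bar>x\<bar> \<le> b * \<bar>x\<bar>"
    using assms ln_le_minus_one[of "\<bar>x\<bar>"] by (intro mult_left_mono) auto
  then show ?thesis using False by (simp add: abspow_def powr_def)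
qed (auto simp: abspow_def)

lemma abspow_mult_pos: "c > 0 \<Longrightarrow> abspow (c * x) b = c powr b * abspow x b"
  by (auto simp: abspow_def abs_mult powr_mult)

lemma abspow_ge_powr:
  assumes "0 < r" "r \<le> \<bar>x\<bar>" "b \<ge> 0"
  shows "r powr b \<le> abspow x b"
  using assms by (auto simp: abspow_def intro: powr_mono2)

lemma abspow_measurable [measurable (raw)]:
  "f \<in> borel_measurable M \<Longrightarrow> (\<lambda>x. abspow (f x) b) \<in> borel_measurable M"
  by (cases "b = 0") (simp_all add: abspow_def)

definition tail_weight :: "nat \<Rightarrow> nat \<Rightarrow> real \<Rightarrow> (nat \<Rightarrow> real) \<Rightarrow> real" where
  "tail_weight m n \<beta> l = exp (- (1/2) * (\<Sum>i\<in>{m..<n}. (l i)\<^sup>2)) *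
     (\<Prod>i\<in>{m..<n}. \<Prod>j\<in>{i<..<n}. abspow (l i - l j) \<beta>)"

definition tail_Z :: "nat \<Rightarrow> nat \<Rightarrow> real \<Rightarrow> ennreal" where
  "tail_Z m n \<beta> = (\<integral>\<^sup>+ l. ennreal (tail_weight m n \<beta> l) \<partial>(\<Pi>\<^sub>M i\<in>{m..<n}. lborel))"

lemma tail_weight_nonneg: "tail_weight m n \<beta> l \<ge> 0"
  unfolding tail_weight_def by (intro mult_nonneg_nonneg prod_nonneg abspow_nonneg) auto

lemma tail_weight_measurable [measurable]:
  "tail_weight m n \<beta> \<in> borel_measurable (\<Pi>\<^sub>M i\<in>{m..<n}. lborel)"
  unfolding tail_weight_def by measurable

lemma tail_weight_cong:
  "(\<And>i. m \<le> i \<Longrightarrow> i < n \<Longrightarrow> l i = l' i) \<Longrightarrow> tail_weight m n \<beta> l = tail_weight m n \<beta> l'"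
  unfolding tail_weight_def by (intro arg_cong2[where f="(*)"] arg_cong[where f=exp] sum.cong prod.cong refl) auto

lemma beta_weight_eq_tail_weight: "beta_weight n \<beta> = tail_weight 0 n \<beta>"
  by (simp add: fun_eq_iff beta_weight_def tail_weight_def atLeast0LessThan)

lemma Zconst_eq_tail_Z: "Zconst n \<beta> = tail_Z 0 n \<beta>"
  by (simp add: Zconst_def tail_Z_def beta_weight_eq_tail_weight atLeast0LessThan)

lemma tail_weight_fun_upd:
  assumes "m < n"
  shows "tail_weight m n \<beta> (l(m := u)) =
           exp (- (1/2) * u\<^sup>2) * (\<Prod>j\<in>{Suc m..<n}. abspow (u - l j) \<beta>) * tail_weight (Suc m) n \<beta> l"
proof -
  have split: "{m..<n} = insert m {Suc m..<n}" and "{m<..<n} = {Suc m..<n}"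
    using assms by auto
  moreover have "(\<Sum>i\<in>{Suc m..<n}. ((l(m := u)) i)\<^sup>2) = (\<Sum>i\<in>{Suc m..<n}. (l i)\<^sup>2)"
    by (intro sum.cong) auto
  moreover have "(\<Prod>i\<in>{Suc m..<n}. \<Prod>j\<in>{i<..<n}. abspow ((l(m := u)) i - (l(m := u)) j) \<beta>) =
                 (\<Prod>i\<in>{Suc m..<n}. \<Prod>j\<in>{i<..<n}. abspow (l i - l j) \<beta>)"
    by (intro prod.cong) auto
  moreover have "(\<Prod>j\<in>{Suc m..<n}. abspow ((l(m := u)) m - (l(m := u)) j) \<beta>) =
                 (\<Prod>j\<in>{Suc m..<n}. abspow (u - l j) \<beta>)"
    by (intro prod.cong) auto
  moreover have "exp (- ((u\<^sup>2 + A) / 2)) = exp (- (u\<^sup>2 / 2)) * exp (- (A / 2))" for A :: real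
    by (simp add: exp_add[symmetric] add_divide_distrib)
  ultimately show ?thesis
    unfolding tail_weight_def split by (simp add: mult_ac)
qed

lemma emeasure_Icc_diff_intervals_ge:
  fixes p :: "'a \<Rightarrow> real" and r :: real
  assumes "finite J" "0 < r" "2 * r * card J \<le> 1"
  shows "1 \<le> emeasure lborel ({-1..1} - (\<Union>j\<in>J. {p j - r<..<p j + r}))"
proof -
  let ?U = "\<Union>j\<in>J. {p j - r<..<p j + r}"
  have U_sets: "?U \<in> sets borel"
    by (intro borel_open) auto
  have "emeasure lborel ?U \<le> (\<Sum>j\<in>J. emeasure lborel {p j - r<..<p j + r})"
    using assms(1) by (intro emeasure_subadditive_finite) auto
  also have "\<dots> = ennreal (2 * r * card J)"
    using assms(2) by (simp add: emeasure_lborel_Ioo ennreal_of_nat_eq_real_of_nat flip: ennreal_mult)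
  also have "\<dots> \<le> 1"
    using assms(3) by (metis ennreal_1 ennreal_leI)
  finally have U: "emeasure lborel ?U \<le> 1" .
  have "ennreal 2 = emeasure lborel {-1..1::real}"
    by simp
  also have "\<dots> \<le> emeasure lborel (({-1..1} - ?U) \<union> ?U)"
    using U_sets by (intro emeasure_mono) auto
  also have "\<dots> \<le> emeasure lborel ({-1..1} - ?U) + emeasure lborel ?U"
    using U_sets by (intro emeasure_subadditive) auto
  also have "\<dots> \<le> emeasure lborel ({-1..1} - ?U) + 1"
    using U by (intro add_left_mono)
  finally have "ennreal 2 \<le> emeasure lborel ({-1..1} - ?U) + 1" .
  then show ?thesis
  proof (cases "emeasure lborel ({-1..1} - ?U)")
    case (real q)
    with \<open>ennreal 2 \<le> _\<close> have "ennreal 2 \<le> ennreal (q + 1)"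
      by (simp add: ennreal_plus)
    then have "1 \<le> q"
      using real by (subst (asm) ennreal_le_iff) auto
    with real show ?thesis
      by (metis ennreal_1 ennreal_leI)
  qed simp
qed

definition repulsion_const :: "nat \<Rightarrow> real \<Rightarrow> real" where
  "repulsion_const N \<beta> = exp (-1/2) * ((1 / (2 * N)) powr \<beta>) ^ N"

lemma nn_integral_gauss_abspow_prod_ge:
  fixes p :: "'a \<Rightarrow> real"
  assumes "finite J" "card J \<le> N" "N \<ge> 1" "\<beta> \<ge> 0"
  shows "ennreal (repulsion_const N \<beta>) \<le>
           (\<integral>\<^sup>+u. ennreal (exp (- (1/2) * u\<^sup>2) * (\<Prod>j\<in>J. abspow (u - p j) \<beta>)) \<partial>lborel)"
proof -
  define r :: real where "r = 1 / (2 * N)"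
  define S where "S = {-1..1} - (\<Union>j\<in>J. {p j - r<..<p j + r})"
  have r: "0 < r" "r \<le> 1" "2 * r * card J \<le> 1"
    using assms(2,3) by (auto simp: r_def field_simps)
  have "S \<in> sets borel"
    unfolding S_def by (intro sets.Diff borel_closed borel_open) auto
  then have S: "S \<in> sets lborel" "1 \<le> emeasure lborel S"
    unfolding S_def using emeasure_Icc_diff_intervals_ge[OF assms(1) r(1,3)] by auto
  have pointwise: "ennreal (repulsion_const N \<beta>) * indicator S u \<le>
                     ennreal (exp (- (1/2) * u\<^sup>2) * (\<Prod>j\<in>J. abspow (u - p j) \<beta>))" for u
  proof (cases "u \<in> S")
    case True
    then have "\<bar>u\<bar> \<le> 1" and far: "\<forall>j\<in>J. r \<le> \<bar>u - p j\<bar>"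
      by (auto simp: S_def)
    then have "exp (-1/2) \<le> exp (- (1/2) * u\<^sup>2)"
      by (simp add: abs_square_le_1)
    moreover have "(r powr \<beta>) ^ N \<le> (\<Prod>j\<in>J. abspow (u - p j) \<beta>)"
    proof -
      have "(r powr \<beta>) ^ N \<le> (r powr \<beta>) ^ card J"
        using r assms(2,4) by (intro power_decreasing) (auto intro: powr_le1)
      also have "\<dots> \<le> (\<Prod>j\<in>J. abspow (u - p j) \<beta>)"
        using far r assms(4) by (subst prod_constant[symmetric]) (intro prod_mono abspow_ge_powr conjI; simp)
      finally show ?thesis .
    qed
    ultimately show ?thesis
      using True by (auto simp: repulsion_const_def r_def intro!: ennreal_leI mult_mono prod_nonneg abspow_nonneg)
  qed simp
  have "ennreal (repulsion_const N \<beta>) \<le> ennreal (repulsion_const N \<beta>) * emeasure lborel S"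
    using S(2) by (metis mult.right_neutral mult_left_mono zero_le)
  also have "\<dots> = (\<integral>\<^sup>+u. ennreal (repulsion_const N \<beta>) * indicator S u \<partial>lborel)"
    using S(1) by (simp add: nn_integral_cmult_indicator)
  also have "\<dots> \<le> (\<integral>\<^sup>+u. ennreal (exp (- (1/2) * u\<^sup>2) * (\<Prod>j\<in>J. abspow (u - p j) \<beta>)) \<partial>lborel)"
    by (intro nn_integral_mono pointwise)
  finally show ?thesis .
qed

lemma repulsion_const_pos: "repulsion_const N \<beta> > 0"
  by (cases "N = 0") (simp_all add: repulsion_const_def)

lemma tail_Z_Suc_le:
  assumes "m < n" "\<beta> \<ge> 0"
  shows "ennreal (repulsion_const n \<beta>) * tail_Z (Suc m) n \<beta> \<le> tail_Z m n \<beta>"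
proof -
  let ?M = "\<Pi>\<^sub>M i\<in>{Suc m..<n}. lborel"
  let ?g = "\<lambda>l u. exp (- (1/2) * u\<^sup>2) * (\<Prod>j\<in>{Suc m..<n}. abspow (u - l j) \<beta>)"
  have split: "{m..<n} = insert m {Suc m..<n}" using assms by auto
  have "(\<integral>\<^sup>+l. ennreal (repulsion_const n \<beta>) * ennreal (tail_weight (Suc m) n \<beta> l) \<partial>?M)
      \<le> (\<integral>\<^sup>+l. (\<integral>\<^sup>+u. ennreal (?g l u) \<partial>lborel) * ennreal (tail_weight (Suc m) n \<beta> l) \<partial>?M)"
    using assms by (intro nn_integral_mono mult_right_mono nn_integral_gauss_abspow_prod_ge) auto
  also have "\<dots> = (\<integral>\<^sup>+l. (\<integral>\<^sup>+u. ennreal (tail_weight m n \<beta> (l(m := u))) \<partial>lborel) \<partial>?M)"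
    using assms(1)
    by (intro nn_integral_cong, subst nn_integral_multc[symmetric])
       (auto simp: tail_weight_fun_upd ennreal_mult tail_weight_nonneg prod_nonneg abspow_nonneg)
  also have "\<dots> = tail_Z m n \<beta>"
    unfolding tail_Z_def split
    by (rule lborel_product.product_nn_integral_insert[symmetric])
       (use tail_weight_measurable[of m n \<beta>] in \<open>auto simp: split\<close>)
  finally show ?thesis
    unfolding tail_Z_def by (subst (asm) nn_integral_cmult) auto
qed

lemma Zconst_ge_tail_Z:
  assumes "k \<le> n" "\<beta> \<ge> 0"
  shows "ennreal (repulsion_const n \<beta> ^ k) * tail_Z k n \<beta> \<le> Zconst n \<beta>"
  using assms(1)
proof (induction k)
  case (Suc k)
  have "ennreal (repulsion_const n \<beta> ^ Suc k) * tail_Z (Suc k) n \<beta> =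
        ennreal (repulsion_const n \<beta> ^ k) * (ennreal (repulsion_const n \<beta>) * tail_Z (Suc k) n \<beta>)"
    by (simp add: repulsion_const_def ennreal_mult' mult_ac)
  also have "\<dots> \<le> ennreal (repulsion_const n \<beta> ^ k) * tail_Z k n \<beta>"
    using Suc.prems assms(2) by (intro mult_left_mono tail_Z_Suc_le) auto
  also have "\<dots> \<le> Zconst n \<beta>"
    using Suc by simp
  finally show ?case .
qed (simp add: Zconst_eq_tail_Z)

section \<open>Gaussian tilts of the partition function\<close>

lemma abs_tilt_le_gauss:
  fixes \<eta> \<epsilon> v :: real
  assumes "\<eta> > 0"
  shows "- (1/2) * v\<^sup>2 + \<epsilon> * \<bar>v\<bar> \<le> - ((1 - \<eta>) / 2) * v\<^sup>2 + \<epsilon>\<^sup>2 / (2 * \<eta>)"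
proof -
  have "0 \<le> (\<eta> * \<bar>v\<bar> - \<epsilon>)\<^sup>2 / (2 * \<eta>)"
    using assms by simp
  also have "\<dots> = \<eta> * v\<^sup>2 / 2 - \<epsilon> * \<bar>v\<bar> + \<epsilon>\<^sup>2 / (2 * \<eta>)"
    using assms by (simp add: field_simps power2_eq_square)
  finally show ?thesis by (simp add: field_simps)
qed

lemma exp_gauss_tilt_le:
  assumes "0 < \<eta>" "\<eta> < 1"
  shows "exp (- (1/2) * (\<Sum>i\<in>I. (l i)\<^sup>2)) * exp (\<epsilon> * (\<Sum>i\<in>I. \<bar>l i\<bar>)) \<le>
           exp (card I * (\<epsilon>\<^sup>2 / (2 * \<eta>))) * exp (- (1/2) * (\<Sum>i\<in>I. (sqrt (1 - \<eta>) * l i)\<^sup>2))"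
proof -
  have "exp (- (1/2) * (\<Sum>i\<in>I. (l i)\<^sup>2)) * exp (\<epsilon> * (\<Sum>i\<in>I. \<bar>l i\<bar>)) =
        exp (\<Sum>i\<in>I. - (1/2) * (l i)\<^sup>2 + \<epsilon> * \<bar>l i\<bar>)"
    unfolding sum.distrib sum_distrib_left[symmetric] exp_add ..
  also have "\<dots> \<le> exp (\<Sum>i\<in>I. - ((1 - \<eta>) / 2) * (l i)\<^sup>2 + \<epsilon>\<^sup>2 / (2 * \<eta>))"
    using assms(1) by (intro exp_mono sum_mono abs_tilt_le_gauss)
  also have "\<dots> = exp (card I * (\<epsilon>\<^sup>2 / (2 * \<eta>))) * exp (- (1/2) * (\<Sum>i\<in>I. (sqrt (1 - \<eta>) * l i)\<^sup>2))"
  proof -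
    have "(\<Sum>i\<in>I. - ((1 - \<eta>) / 2) * (l i)\<^sup>2) = - (1/2) * (\<Sum>i\<in>I. (sqrt (1 - \<eta>) * l i)\<^sup>2)"
      using assms(2) by (simp add: sum_distrib_left power_mult_distrib)
    then show ?thesis
      unfolding sum.distrib sum_constant exp_add by (rule ssubst) (rule mult.commute)
  qed
  finally show ?thesis .
qed

lemma prod_pairs_const_le:
  fixes q :: real
  assumes "q \<ge> 1" "I \<subseteq> {..<n}"
  shows "(\<Prod>i\<in>I. \<Prod>j\<in>{i<..<n}. q) \<le> q ^ (n * n)"
proof -
  have "(\<Prod>i\<in>I. \<Prod>j\<in>{i<..<n}. q) \<le> (\<Prod>i\<in>I. q ^ n)"
    using assms(1) by (intro prod_mono conjI) (auto intro!: power_increasing)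
  also have "\<dots> = (q ^ n) ^ card I"
    by simp
  also have "\<dots> \<le> (q ^ n) ^ n"
    using assms card_mono[OF _ assms(2)] by (intro power_increasing one_le_power) auto
  finally show ?thesis
    by (simp add: power_mult)
qed

lemma prod_abspow_scale_le:
  fixes s :: real
  assumes "0 < s" "s \<le> 1" "\<beta> \<ge> 0" "I \<subseteq> {..<n}"
  shows "(\<Prod>i\<in>I. \<Prod>j\<in>{i<..<n}. abspow (l i - l j) \<beta>) \<le>
           s powr (- \<beta> * (real n)\<^sup>2) * (\<Prod>i\<in>I. \<Prod>j\<in>{i<..<n}. abspow (s * l i - s * l j) \<beta>)"
proof -
  define q where "q = s powr (- \<beta>)"
  have q: "q \<ge> 1"
    using powr_mono'[of "- \<beta>" 0 s] assms by (simp add: q_def)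
  have "q * s powr \<beta> = 1"
    using assms(1) by (simp add: q_def flip: powr_add)
  then have scale: "abspow (a - b) \<beta> = q * abspow (s * a - s * b) \<beta>" for a b
    using assms(1) by (simp add: abspow_mult_pos mult.assoc[symmetric] flip: right_diff_distrib)
  have "(\<Prod>i\<in>I. \<Prod>j\<in>{i<..<n}. abspow (l i - l j) \<beta>) =
        (\<Prod>i\<in>I. \<Prod>j\<in>{i<..<n}. q * abspow (s * l i - s * l j) \<beta>)"
    by (intro prod.cong refl scale)
  also have "\<dots> = (\<Prod>i\<in>I. \<Prod>j\<in>{i<..<n}. q) * (\<Prod>i\<in>I. \<Prod>j\<in>{i<..<n}. abspow (s * l i - s * l j) \<beta>)"
    by (simp add: prod.distrib)
  also have "\<dots> \<le> q ^ (n * n) * (\<Prod>i\<in>I. \<Prod>j\<in>{i<..<n}. abspow (s * l i - s * l j) \<beta>)"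
    using q assms(4) by (intro mult_right_mono prod_pairs_const_le) (auto intro: prod_nonneg abspow_nonneg)
  also have "q ^ (n * n) = s powr (- \<beta> * (real n)\<^sup>2)"
    using assms(1) by (simp add: q_def powr_power power2_eq_square mult_ac)
  finally show ?thesis .
qed

lemma tail_weight_tilt_le:
  assumes "0 < \<eta>" "\<eta> < 1" "\<beta> \<ge> 0"
  shows "tail_weight m n \<beta> l * exp (\<epsilon> * (\<Sum>i\<in>{m..<n}. \<bar>l i\<bar>)) \<le>
           exp (n * \<epsilon>\<^sup>2 / (2 * \<eta>)) * sqrt (1 - \<eta>) powr (- \<beta> * (real n)\<^sup>2) *
           tail_weight m n \<beta> (\<lambda>i. sqrt (1 - \<eta>) * l i)"
proof -
  let ?s = "sqrt (1 - \<eta>)"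
  have "exp (- (1/2) * (\<Sum>i\<in>{m..<n}. (l i)\<^sup>2)) * exp (\<epsilon> * (\<Sum>i\<in>{m..<n}. \<bar>l i\<bar>)) \<le>
        exp (card {m..<n} * (\<epsilon>\<^sup>2 / (2 * \<eta>))) * exp (- (1/2) * (\<Sum>i\<in>{m..<n}. (?s * l i)\<^sup>2))"
    by (rule exp_gauss_tilt_le[OF assms(1,2)])
  also have "\<dots> \<le> exp (n * \<epsilon>\<^sup>2 / (2 * \<eta>)) * exp (- (1/2) * (\<Sum>i\<in>{m..<n}. (?s * l i)\<^sup>2))"
    using assms(1) mult_right_mono[of "real (card {m..<n})" "real n" "\<epsilon>\<^sup>2 / (2 * \<eta>)"]
    by (intro mult_right_mono) auto
  finally have gauss: "exp (- (1/2) * (\<Sum>i\<in>{m..<n}. (l i)\<^sup>2)) * exp (\<epsilon> * (\<Sum>i\<in>{m..<n}. \<bar>l i\<bar>)) \<le>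
      exp (n * \<epsilon>\<^sup>2 / (2 * \<eta>)) * exp (- (1/2) * (\<Sum>i\<in>{m..<n}. (?s * l i)\<^sup>2))" .
  have vandermonde: "(\<Prod>i\<in>{m..<n}. \<Prod>j\<in>{i<..<n}. abspow (l i - l j) \<beta>) \<le>
      ?s powr (- \<beta> * (real n)\<^sup>2) * (\<Prod>i\<in>{m..<n}. \<Prod>j\<in>{i<..<n}. abspow (?s * l i - ?s * l j) \<beta>)"
    using assms by (intro prod_abspow_scale_le) auto
  have "tail_weight m n \<beta> l * exp (\<epsilon> * (\<Sum>i\<in>{m..<n}. \<bar>l i\<bar>)) =
        (exp (- (1/2) * (\<Sum>i\<in>{m..<n}. (l i)\<^sup>2)) * exp (\<epsilon> * (\<Sum>i\<in>{m..<n}. \<bar>l i\<bar>))) *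
        (\<Prod>i\<in>{m..<n}. \<Prod>j\<in>{i<..<n}. abspow (l i - l j) \<beta>)"
    by (simp add: tail_weight_def mult_ac)
  also have "\<dots> \<le> (exp (n * \<epsilon>\<^sup>2 / (2 * \<eta>)) * exp (- (1/2) * (\<Sum>i\<in>{m..<n}. (?s * l i)\<^sup>2))) *
      (?s powr (- \<beta> * (real n)\<^sup>2) * (\<Prod>i\<in>{m..<n}. \<Prod>j\<in>{i<..<n}. abspow (?s * l i - ?s * l j) \<beta>))"
    using gauss vandermonde by (rule mult_mono) (auto intro: prod_nonneg abspow_nonneg)
  also have "\<dots> = exp (n * \<epsilon>\<^sup>2 / (2 * \<eta>)) * ?s powr (- \<beta> * (real n)\<^sup>2) * tail_weight m n \<beta> (\<lambda>i. ?s * l i)"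
    by (simp add: tail_weight_def mult_ac)
  finally show ?thesis .
qed

lemma nn_integral_tail_weight_scale:
  assumes "s > 0"
  shows "(\<integral>\<^sup>+l. ennreal (tail_weight m n \<beta> (\<lambda>i. s * l i)) \<partial>(\<Pi>\<^sub>M i\<in>{m..<n}. lborel)) =
           ennreal ((1 / s) ^ (n - m)) * tail_Z m n \<beta>"
proof -
  have "tail_weight m n \<beta> (\<lambda>i. s * l i) = tail_weight m n \<beta> (\<lambda>i\<in>{m..<n}. 0 + s * l i)" for l
    by (rule tail_weight_cong) auto
  then show ?thesis
    using nn_integral_PiM_lborel_affine[of "{m..<n}" s "\<lambda>l. ennreal (tail_weight m n \<beta> l)" 0] assms
    by (simp add: tail_Z_def)
qed

lemma nn_integral_tail_weight_tilt_le:
  assumes "0 < \<eta>" "\<eta> < 1" "\<beta> \<ge> 0"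
  shows "(\<integral>\<^sup>+l. ennreal (tail_weight m n \<beta> l * exp (\<epsilon> * (\<Sum>i\<in>{m..<n}. \<bar>l i\<bar>))) \<partial>(\<Pi>\<^sub>M i\<in>{m..<n}. lborel))
           \<le> ennreal (exp (n * \<epsilon>\<^sup>2 / (2 * \<eta>)) * sqrt (1 - \<eta>) powr (- (n + \<beta> * (real n)\<^sup>2))) * tail_Z m n \<beta>"
proof -
  let ?M = "\<Pi>\<^sub>M i\<in>{m..<n}. lborel"
  define s where "s = sqrt (1 - \<eta>)"
  define C where "C = exp (n * \<epsilon>\<^sup>2 / (2 * \<eta>)) * s powr (- \<beta> * (real n)\<^sup>2)"
  have s: "0 < s" "s \<le> 1"
    using assms by (auto simp: s_def)
  have C: "C \<ge> 0"
    by (simp add: C_def)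
  have "(\<integral>\<^sup>+l. ennreal (tail_weight m n \<beta> l * exp (\<epsilon> * (\<Sum>i\<in>{m..<n}. \<bar>l i\<bar>))) \<partial>?M)
      \<le> (\<integral>\<^sup>+l. ennreal C * ennreal (tail_weight m n \<beta> (\<lambda>i. s * l i)) \<partial>?M)"
    using tail_weight_tilt_le[OF assms]
    by (intro nn_integral_mono) (simp add: C_def s_def ennreal_mult'[symmetric] ennreal_leI)
  also have "\<dots> = ennreal C * (\<integral>\<^sup>+l. ennreal (tail_weight m n \<beta> (\<lambda>i. s * l i)) \<partial>?M)"
    by (rule nn_integral_cmult) (unfold tail_weight_def, measurable)
  also have "\<dots> = ennreal C * (ennreal ((1 / s) ^ (n - m)) * tail_Z m n \<beta>)"
    using s(1) by (simp add: nn_integral_tail_weight_scale)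
  also have "\<dots> \<le> ennreal C * (ennreal ((1 / s) ^ n) * tail_Z m n \<beta>)"
    using s by (intro mult_left_mono mult_right_mono ennreal_leI power_increasing) auto
  also have "(1 / s) ^ n = s powr (- n)"
    using s(1) by (simp add: powr_minus_divide powr_realpow power_one_over)
  also have "ennreal C * (ennreal (s powr (- n)) * tail_Z m n \<beta>) = ennreal (C * s powr (- n)) * tail_Z m n \<beta>"
    using C by (simp add: ennreal_mult mult.assoc)
  also have "C * s powr (- n) = exp (n * \<epsilon>\<^sup>2 / (2 * \<eta>)) * sqrt (1 - \<eta>) powr (- (n + \<beta> * (real n)\<^sup>2))"
    by (simp add: C_def s_def mult.assoc algebra_simps flip: powr_add)
  finally show ?thesis .
qed

section \<open>Bound on the correlation functions\<close>

lemma beta_weight_eq_head_tail: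
  assumes "k \<le> n"
  shows "beta_weight n \<beta> z = exp (- (1/2) * (\<Sum>i<k. (z i)\<^sup>2)) *
           (\<Prod>i<k. \<Prod>j\<in>{i<..<n}. abspow (z i - z j) \<beta>) * tail_weight k n \<beta> z"
proof -
  have sum_split: "(\<Sum>i<n. (z i)\<^sup>2) = (\<Sum>i<k. (z i)\<^sup>2) + (\<Sum>i\<in>{k..<n}. (z i)\<^sup>2)"
    using sum.atLeastLessThan_concat[of 0 k n "\<lambda>i. (z i)\<^sup>2"] assms by (simp add: atLeast0LessThan)
  have prod_split: "(\<Prod>i<n. \<Prod>j\<in>{i<..<n}. abspow (z i - z j) \<beta>) =
      (\<Prod>i<k. \<Prod>j\<in>{i<..<n}. abspow (z i - z j) \<beta>) * (\<Prod>i\<in>{k..<n}. \<Prod>j\<in>{i<..<n}. abspow (z i - z j) \<beta>)"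
    using prod.atLeastLessThan_concat[of 0 k n "\<lambda>i. \<Prod>j\<in>{i<..<n}. abspow (z i - z j) \<beta>"] assms
    by (simp add: atLeast0LessThan)
  have exp_split: "exp (- (1/2) * (A + B)) = exp (- (1/2) * A) * exp (- (1/2) * B)" for A B :: real
    by (simp add: exp_add[symmetric] algebra_simps)
  show ?thesis
    unfolding beta_weight_def tail_weight_def sum_split prod_split exp_split by (simp only: mult_ac)
qed

lemma prod_abspow_cross_le:
  fixes k n :: nat and z :: "nat \<Rightarrow> real"
  assumes "\<beta> \<ge> 0"
  shows "(\<Prod>i<k. \<Prod>j\<in>{i<..<n}. abspow (z i - z j) \<beta>) \<le>
           exp (\<beta> * (n * (\<Sum>i<k. \<bar>z i\<bar>) + k * (\<Sum>j<n. \<bar>z j\<bar>)))"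
proof -
  have "(\<Prod>i<k. \<Prod>j\<in>{i<..<n}. abspow (z i - z j) \<beta>) \<le> (\<Prod>i<k. \<Prod>j\<in>{i<..<n}. exp (\<beta> * (\<bar>z i\<bar> + \<bar>z j\<bar>)))"
  proof (intro prod_mono conjI abspow_nonneg prod_nonneg)
    fix i j
    have "abspow (z i - z j) \<beta> \<le> exp (\<beta> * \<bar>z i - z j\<bar>)"
      using assms by (rule abspow_le_exp_abs)
    also have "\<dots> \<le> exp (\<beta> * (\<bar>z i\<bar> + \<bar>z j\<bar>))"
      using assms by (intro exp_mono mult_left_mono) auto
    finally show "abspow (z i - z j) \<beta> \<le> exp (\<beta> * (\<bar>z i\<bar> + \<bar>z j\<bar>))" .
  qed
  also have "\<dots> = exp (\<beta> * (\<Sum>i<k. \<Sum>j\<in>{i<..<n}. \<bar>z i\<bar> + \<bar>z j\<bar>))"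
    unfolding sum_distrib_left exp_sum[OF finite_lessThan] exp_sum[OF finite_greaterThanLessThan] ..
  also have "\<dots> \<le> exp (\<beta> * (\<Sum>i<k. \<Sum>j<n. \<bar>z i\<bar> + \<bar>z j\<bar>))"
    using assms by (intro exp_mono mult_left_mono sum_mono sum_mono2) auto
  also have "(\<Sum>i<k. \<Sum>j<n. \<bar>z i\<bar> + \<bar>z j\<bar>) = n * (\<Sum>i<k. \<bar>z i\<bar>) + k * (\<Sum>j<n. \<bar>z j\<bar>)"
    by (simp add: sum.distrib sum_distrib_left[symmetric] mult.commute)
  finally show ?thesis .
qed

lemma nn_integral_beta_weight_section_le:
  assumes "k \<le> n" "\<beta> \<ge> 0" "0 < \<eta>" "\<eta> < 1"
  shows "(\<integral>\<^sup>+w. ennreal (beta_weight n \<beta> (\<lambda>i. if i < k then t i else w i)) \<partial>(\<Pi>\<^sub>M i\<in>{k..<n}. lborel)) \<le>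
           ennreal (exp (- (1/2) * (\<Sum>i<k. (t i)\<^sup>2)) * exp (\<beta> * (n + k) * (\<Sum>i<k. \<bar>t i\<bar>)) *
                    exp (n * (\<beta> * k)\<^sup>2 / (2 * \<eta>)) * sqrt (1 - \<eta>) powr (- (n + \<beta> * (real n)\<^sup>2))) *
           tail_Z k n \<beta>"
proof -
  let ?M = "\<Pi>\<^sub>M i\<in>{k..<n}. lborel"
  define A where "A = exp (- (1/2) * (\<Sum>i<k. (t i)\<^sup>2)) * exp (\<beta> * (n + k) * (\<Sum>i<k. \<bar>t i\<bar>))"
  define E where "E = exp (n * (\<beta> * k)\<^sup>2 / (2 * \<eta>)) * sqrt (1 - \<eta>) powr (- (n + \<beta> * (real n)\<^sup>2))"
  define g where "g w = tail_weight k n \<beta> w * exp ((\<beta> * k) * (\<Sum>i\<in>{k..<n}. \<bar>w i\<bar>))" for w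
  have pointwise: "beta_weight n \<beta> (\<lambda>i. if i < k then t i else w i) \<le> A * g w" for w
  proof -
    define z where "z = (\<lambda>i. if i < k then t i else w i)"
    have "(\<Sum>j<n. \<bar>z j\<bar>) = (\<Sum>i<k. \<bar>t i\<bar>) + (\<Sum>i\<in>{k..<n}. \<bar>w i\<bar>)"
      using sum.atLeastLessThan_concat[of 0 k n "\<lambda>i. \<bar>z i\<bar>"] assms(1)
      by (simp add: atLeast0LessThan z_def)
    then have "(\<Prod>i<k. \<Prod>j\<in>{i<..<n}. abspow (z i - z j) \<beta>) \<le>
               exp (\<beta> * (n + k) * (\<Sum>i<k. \<bar>t i\<bar>) + (\<beta> * k) * (\<Sum>i\<in>{k..<n}. \<bar>w i\<bar>))"
      using prod_abspow_cross_le[OF assms(2), where k=k and n=n and z=z] by (simp add: z_def algebra_simps)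
    moreover have "tail_weight k n \<beta> z = tail_weight k n \<beta> w"
      by (rule tail_weight_cong) (simp add: z_def)
    ultimately have "beta_weight n \<beta> z \<le> exp (- (1/2) * (\<Sum>i<k. (t i)\<^sup>2)) *
        exp (\<beta> * (n + k) * (\<Sum>i<k. \<bar>t i\<bar>) + (\<beta> * k) * (\<Sum>i\<in>{k..<n}. \<bar>w i\<bar>)) * tail_weight k n \<beta> w"
      unfolding beta_weight_eq_head_tail[OF assms(1)]
      by (auto simp: z_def intro!: mult_mono tail_weight_nonneg)
    then show ?thesis
      by (simp add: z_def A_def g_def exp_add mult_ac)
  qed
  have "(\<integral>\<^sup>+w. ennreal (beta_weight n \<beta> (\<lambda>i. if i < k then t i else w i)) \<partial>?M) \<le>
        (\<integral>\<^sup>+w. ennreal A * ennreal (g w) \<partial>?M)"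
    using pointwise by (intro nn_integral_mono) (simp add: A_def ennreal_mult'[symmetric] ennreal_leI)
  also have "\<dots> = ennreal A * (\<integral>\<^sup>+w. ennreal (g w) \<partial>?M)"
    by (rule nn_integral_cmult) (simp add: g_def)
  also have "\<dots> \<le> ennreal A * (ennreal E * tail_Z k n \<beta>)"
    unfolding g_def E_def using assms(2-4) by (intro mult_left_mono nn_integral_tail_weight_tilt_le) auto
  also have "\<dots> = ennreal (A * E) * tail_Z k n \<beta>"
    by (simp add: A_def E_def ennreal_mult mult.assoc)
  finally show ?thesis
    by (simp add: A_def E_def mult.assoc)
qed

lemma measurable_fix_head [measurable]:
  fixes i k n :: nat
  shows "i < n \<Longrightarrow> (\<lambda>y. if i < k then c i else y i :: real) \<in> borel_measurable (\<Pi>\<^sub>M j\<in>{k..<n}. lborel)"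
  by (cases "i < k") auto

lemma rho_mult_density_eq:
  assumes "k \<le> n" "a > 0"
  shows "rho n \<beta> a b \<delta> (\<lambda>i. if i < k then x i else y i) * (\<Prod>i\<in>{k..<n}. ennreal (exp (- y i / \<delta>))) =
           ennreal ((\<Prod>i<k. exp (x i / \<delta>)) / a ^ n) *
           ennreal (beta_weight n \<beta> (\<lambda>i. if i < k then b + x i / a else b + y i / a)) / Zconst n \<beta>"
proof -
  define P where "P = (\<Prod>i<k. exp (x i / \<delta>))"
  define Q where "Q = (\<Prod>i\<in>{k..<n}. exp (y i / \<delta>))"
  define Q' where "Q' = (\<Prod>i\<in>{k..<n}. exp (- y i / \<delta>))"
  define bw where "bw = beta_weight n \<beta> (\<lambda>i. b + (if i < k then x i else y i) / a)"
  have P: "P \<ge> 0"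
    by (simp add: P_def prod_nonneg)
  have bw: "bw \<ge> 0"
    unfolding bw_def beta_weight_eq_tail_weight by (rule tail_weight_nonneg)
  have Q': "Q' \<ge> 0" "Q * Q' = 1"
    by (auto simp: Q_def Q'_def prod_nonneg prod.distrib[symmetric] exp_add[symmetric])
  have "(\<Prod>i<n. exp ((if i < k then x i else y i) / \<delta>)) = P * Q"
    using prod.atLeastLessThan_concat[of 0 k n "\<lambda>i. exp ((if i < k then x i else y i) / \<delta>)"] assms(1)
    by (simp add: atLeast0LessThan P_def Q_def)
  moreover have "(\<Prod>i\<in>{k..<n}. ennreal (exp (- y i / \<delta>))) = ennreal Q'"
    unfolding Q'_def by (rule prod_ennreal) simp
  ultimately have "rho n \<beta> a b \<delta> (\<lambda>i. if i < k then x i else y i) * (\<Prod>i\<in>{k..<n}. ennreal (exp (- y i / \<delta>)))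
      = ennreal (bw * (P * Q) / a ^ n) / Zconst n \<beta> * ennreal Q'"
    by (simp only: rho_def bw_def[symmetric])
  also have "\<dots> = ennreal (bw * (P * Q) / a ^ n * Q') / Zconst n \<beta>"
    by (simp add: ennreal_divide_times ennreal_times_divide ennreal_mult''[OF Q'(1), symmetric])
  also have "bw * (P * Q) / a ^ n * Q' = P / a ^ n * bw"
    using Q'(2) by (simp add: field_simps)
  also have "bw = beta_weight n \<beta> (\<lambda>i. if i < k then b + x i / a else b + y i / a)"
    unfolding bw_def by (auto intro!: arg_cong[where f="beta_weight n \<beta>"])
  finally show ?thesis
    unfolding P_def[symmetric] using P assms(2) by (subst (asm) ennreal_mult') auto
qed

lemma corr_eq_nn_integral_beta_weight:
  assumes "k \<le> n" "a > 0"
  shows "corr n k \<beta> a b \<delta> x =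
           ennreal (fact n / fact (n - k) * (\<Prod>i<k. exp (x i / \<delta>)) / a ^ k) *
           (\<integral>\<^sup>+w. ennreal (beta_weight n \<beta> (\<lambda>i. if i < k then b + x i / a else w i))
              \<partial>(\<Pi>\<^sub>M i\<in>{k..<n}. lborel)) / Zconst n \<beta>"
proof -
  let ?M = "\<Pi>\<^sub>M i\<in>{k..<n}. lborel"
  define P where "P = (\<Prod>i<k. exp (x i / \<delta>))"
  define f where "f w = ennreal (beta_weight n \<beta> (\<lambda>i. if i < k then b + x i / a else w i))" for w
  have P: "P \<ge> 0"
    by (simp add: P_def prod_nonneg)
  have [measurable]: "f \<in> borel_measurable ?M"
    unfolding f_def beta_weight_def by measurable
  have density: "rho n \<beta> a b \<delta> (\<lambda>i. if i < k then x i else y i) * (\<Prod>i\<in>{k..<n}. ennreal (exp (- y i / \<delta>)))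
                   = ennreal (P / a ^ n) * f (\<lambda>i\<in>{k..<n}. b + (1 / a) * y i) / Zconst n \<beta>" for y
  proof -
    have "f (\<lambda>i\<in>{k..<n}. b + (1 / a) * y i) =
          ennreal (beta_weight n \<beta> (\<lambda>i. if i < k then b + x i / a else b + y i / a))"
      unfolding f_def beta_weight_eq_tail_weight by (intro arg_cong[where f=ennreal] tail_weight_cong) auto
    with rho_mult_density_eq[OF assms] show ?thesis
      by (simp only: P_def)
  qed
  have "corr n k \<beta> a b \<delta> x = ennreal (fact n / fact (n - k)) *
          (\<integral>\<^sup>+y. rho n \<beta> a b \<delta> (\<lambda>i. if i < k then x i else y i) \<partial>(\<Pi>\<^sub>M i\<in>{k..<n}. mu_ref \<delta>))"
    by (simp add: corr_def)
  also have "(\<integral>\<^sup>+y. rho n \<beta> a b \<delta> (\<lambda>i. if i < k then x i else y i) \<partial>(\<Pi>\<^sub>M i\<in>{k..<n}. mu_ref \<delta>)) =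
      (\<integral>\<^sup>+y. rho n \<beta> a b \<delta> (\<lambda>i. if i < k then x i else y i) * (\<Prod>i\<in>{k..<n}. ennreal (exp (- y i / \<delta>))) \<partial>?M)"
    unfolding mu_ref_def
    by (rule nn_integral_PiM_density) (auto simp: rho_def beta_weight_def Zconst_def)
  also have "\<dots> = (\<integral>\<^sup>+y. ennreal (P / a ^ n) * f (\<lambda>i\<in>{k..<n}. b + (1 / a) * y i) / Zconst n \<beta> \<partial>?M)"
    by (simp only: density)
  also have "\<dots> = ennreal (P / a ^ n) * (\<integral>\<^sup>+y. f (\<lambda>i\<in>{k..<n}. b + (1 / a) * y i) \<partial>?M) / Zconst n \<beta>"
    by (simp add: nn_integral_divide nn_integral_cmult)
  also have "(\<integral>\<^sup>+y. f (\<lambda>i\<in>{k..<n}. b + (1 / a) * y i) \<partial>?M) = ennreal (a ^ (n - k)) * (\<integral>\<^sup>+w. f w \<partial>?M)"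
    using nn_integral_PiM_lborel_affine[of "{k..<n}" "1 / a" f b] assms(2) by simp
  also have "ennreal (fact n / fact (n - k)) * (ennreal (P / a ^ n) * (ennreal (a ^ (n - k)) * (\<integral>\<^sup>+w. f w \<partial>?M)) / Zconst n \<beta>)
      = ennreal (fact n / fact (n - k) * (P / a ^ n) * a ^ (n - k)) * (\<integral>\<^sup>+w. f w \<partial>?M) / Zconst n \<beta>"
    using P assms(2) by (simp add: ennreal_times_divide mult.assoc[symmetric] flip: ennreal_mult)
  also have "fact n / fact (n - k) * (P / a ^ n) * a ^ (n - k) = fact n / fact (n - k) * P / a ^ k"
    using assms by (simp add: power_diff)
  finally show ?thesis
    by (simp add: f_def P_def)
qed

lemma ennreal_mult_divide_le:
  assumes "ennreal c * G \<le> Z" and "c > 0" and "x \<ge> 0"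
  shows "ennreal x * G / Z \<le> ennreal (x / c)"
proof (cases G)
  case top
  then have "Z = top" using assms(1,2) by (simp add: ennreal_mult_top top_unique)
  then show ?thesis by simp
next
  case (real g)
  show ?thesis
  proof (cases "g = 0 \<or> Z = top")
    case True
    then show ?thesis using real by auto
  next
    case False
    then obtain z where z: "Z = ennreal z" "z \<ge> 0" and g: "g > 0"
      using real by (cases Z) auto
    have "c * g \<le> z"
      using assms(1,2) real z g by (simp add: ennreal_mult'[symmetric] ennreal_le_iff)
    moreover have "c * g > 0" using assms(2) g by simp
    ultimately have "z > 0" by linarith
    have "x * g / z \<le> x * g / (c * g)"
      using \<open>c * g \<le> z\<close> \<open>z > 0\<close> assms(2,3) g by (intro divide_left_mono) auto
    with g z \<open>z > 0\<close> real assms(2,3) show ?thesis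
      by (simp add: ennreal_mult'[symmetric] divide_ennreal mult_pos_pos ennreal_leI)
  qed
qed

lemma corr_le:
  assumes "k \<le> n" "a > 0" "\<beta> \<ge> 0" "0 < \<eta>" "\<eta> < 1"
  shows "corr n k \<beta> a b \<delta> x \<le>
           ennreal (fact n / fact (n - k) / a ^ k *
             (\<Prod>i<k. exp (x i / \<delta>) * exp (- (1/2) * (b + x i / a)\<^sup>2) * exp (\<beta> * (n + k) * \<bar>b + x i / a\<bar>)) *
             exp (n * (\<beta> * k)\<^sup>2 / (2 * \<eta>)) * sqrt (1 - \<eta>) powr (- (n + \<beta> * (real n)\<^sup>2)) /
             repulsion_const n \<beta> ^ k)"
proof -
  define t where "t i = b + x i / a" for i
  define C where "C = fact n / fact (n - k) * (\<Prod>i<k. exp (x i / \<delta>)) / a ^ k"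
  define A where "A = exp (- (1/2) * (\<Sum>i<k. (t i)\<^sup>2)) * exp (\<beta> * (n + k) * (\<Sum>i<k. \<bar>t i\<bar>))"
  define E where "E = exp (n * (\<beta> * k)\<^sup>2 / (2 * \<eta>)) * sqrt (1 - \<eta>) powr (- (n + \<beta> * (real n)\<^sup>2))"
  have nonneg: "C \<ge> 0" "A \<ge> 0" "E \<ge> 0"
    using assms(2) by (auto simp: C_def A_def E_def prod_nonneg)
  have "corr n k \<beta> a b \<delta> x =
        ennreal C * (\<integral>\<^sup>+w. ennreal (beta_weight n \<beta> (\<lambda>i. if i < k then t i else w i)) \<partial>(\<Pi>\<^sub>M i\<in>{k..<n}. lborel)) /
        Zconst n \<beta>"
    unfolding corr_eq_nn_integral_beta_weight[OF assms(1,2)] C_def t_def ..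
  also have "\<dots> \<le> ennreal C * (ennreal (A * E) * tail_Z k n \<beta>) / Zconst n \<beta>"
    unfolding A_def E_def mult.assoc[of "exp _"]
    using nn_integral_beta_weight_section_le[OF assms(1,3-5)]
    by (intro divide_right_mono_ennreal mult_left_mono) (auto simp: mult.assoc)
  also have "\<dots> = ennreal (C * (A * E)) * tail_Z k n \<beta> / Zconst n \<beta>"
    using nonneg by (simp add: ennreal_mult mult.assoc)
  also have "\<dots> \<le> ennreal (C * (A * E) / repulsion_const n \<beta> ^ k)"
    using nonneg Zconst_ge_tail_Z[OF assms(1,3)]
    by (intro ennreal_mult_divide_le) (auto intro!: zero_less_power repulsion_const_pos)
  also have "C * (A * E) = fact n / fact (n - k) / a ^ k *
      (\<Prod>i<k. exp (x i / \<delta>) * exp (- (1/2) * (t i)\<^sup>2) * exp (\<beta> * (n + k) * \<bar>t i\<bar>)) * E"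
    by (simp add: C_def A_def prod.distrib exp_sum sum_distrib_left)
  finally show ?thesis
    by (simp add: t_def E_def mult.assoc)
qed

section \<open>Edge scaling\<close>

lemma gauss_at_b_seq_le:
  assumes "n \<ge> 2" "ds n > 0"
  shows "n / a_seq ds n * exp (- (1/2) * (b_seq ds n)\<^sup>2) \<le> sqrt (2 * pi)"
proof -
  define L where "L = ln (real n)"
  define s where "s = sqrt (2 * L)"
  define q where "q = ln L + 2 * ln (ds n) + ln (4 * pi)"
  have L: "L > 0"
    using assms(1) by (simp add: L_def)
  have s: "s > 0" "s\<^sup>2 = 2 * L"
    using L by (auto simp: s_def)
  have "(b_seq ds n)\<^sup>2 = s\<^sup>2 - q + (q / (2 * s))\<^sup>2"
    using s(1) by (simp add: b_seq_def L_def s_def q_def power2_eq_square field_simps)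
  then have "(b_seq ds n)\<^sup>2 \<ge> 2 * L - q"
    using s(2) by simp
  then have "exp (- (1/2) * (b_seq ds n)\<^sup>2) \<le> exp (- L) * exp (q / 2)"
    by (simp add: exp_add[symmetric])
  also have "exp (- L) = 1 / n"
    using assms(1) by (simp add: L_def exp_minus inverse_eq_divide)
  also have "exp (q / 2) = sqrt L * ds n * sqrt (4 * pi)"
  proof -
    have "q / 2 = ln (sqrt L) + ln (ds n) + ln (sqrt (4 * pi))"
      using L by (simp add: q_def ln_sqrt add_divide_distrib)
    then have "exp (q / 2) = exp (ln (sqrt L)) * exp (ln (ds n)) * exp (ln (sqrt (4 * pi)))"
      by (simp only: exp_add)
    then show ?thesis
      using L assms(2) by simp
  qed
  finally have "n / a_seq ds n * exp (- (1/2) * (b_seq ds n)\<^sup>2) \<le>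
                n / a_seq ds n * (1 / n * (sqrt L * ds n * sqrt (4 * pi)))"
    using assms s(1) by (intro mult_left_mono) (auto simp: a_seq_def L_def s_def)
  also have "\<dots> = sqrt L * sqrt (4 * pi) / s"
    using assms by (simp add: a_seq_def L_def s_def)
  also have "sqrt L * sqrt (4 * pi) = sqrt (2 * pi) * s"
    by (simp add: s_def real_sqrt_mult[symmetric] mult_ac)
  finally show ?thesis
    using s(1) by simp
qed

lemma one_point_factor_le:
  fixes a b x B \<beta> \<delta> :: real and k n :: nat
  assumes "a > 0" "\<bar>x\<bar> \<le> B" "\<bar>1 / \<delta> - b / a\<bar> \<le> 1" "\<beta> \<ge> 0" "k \<le> n"
    and "2 * \<beta> * n * (\<bar>b\<bar> + B / a) \<le> 1"
  shows "exp (x / \<delta>) * exp (- (1/2) * (b + x / a)\<^sup>2) * exp (\<beta> * (n + k) * \<bar>b + x / a\<bar>) \<le>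
           exp (- (1/2) * b\<^sup>2) * exp (B + 1)"
proof -
  have "(b + x / a)\<^sup>2 = b\<^sup>2 + 2 * (b * x / a) + (x / a)\<^sup>2"
    by (simp add: power2_eq_square algebra_simps)
  then have "- (1/2) * (b + x / a)\<^sup>2 \<le> - (1/2) * b\<^sup>2 - b * x / a"
    using zero_le_power2[of "x / a"] by linarith
  moreover have "x / \<delta> - b * x / a \<le> B"
  proof -
    have "x / \<delta> - b * x / a = x * (1 / \<delta> - b / a)"
      by (simp add: field_simps)
    also have "\<dots> \<le> \<bar>x\<bar> * \<bar>1 / \<delta> - b / a\<bar>"
      by (metis abs_ge_self abs_mult)
    also have "\<dots> \<le> B"
      using assms(2,3) mult_mono[of "\<bar>x\<bar>" B "\<bar>1 / \<delta> - b / a\<bar>" 1] by simp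
    finally show ?thesis .
  qed
  moreover have "\<beta> * (n + k) * \<bar>b + x / a\<bar> \<le> 1"
  proof -
    have "\<bar>b + x / a\<bar> \<le> \<bar>b\<bar> + \<bar>x / a\<bar>"
      by (rule abs_triangle_ineq)
    also have "\<dots> \<le> \<bar>b\<bar> + B / a"
      using assms(1,2) by (simp add: abs_divide divide_right_mono)
    finally have t_le: "\<bar>b + x / a\<bar> \<le> \<bar>b\<bar> + B / a" .
    have \<beta>_le: "\<beta> * (n + k) \<le> 2 * \<beta> * n"
      using mult_left_mono[of "real n + real k" "2 * real n" \<beta>] assms(4,5) by (simp add: algebra_simps)
    have "\<beta> * (n + k) * \<bar>b + x / a\<bar> \<le> 2 * \<beta> * n * (\<bar>b\<bar> + B / a)"
      using mult_mono[OF \<beta>_le t_le] assms(4) by simp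
    with assms(6) show ?thesis by linarith
  qed
  ultimately show ?thesis
    by (simp add: exp_add[symmetric])
qed

lemma tilt_const_le:
  fixes n k :: nat and \<beta> :: real
  assumes "1 \<le> k" "k \<le> n" "\<beta> \<ge> 0" "\<beta> * n \<le> 1"
  defines "\<eta> \<equiv> k / (2 * n)"
  shows "exp (n * (\<beta> * k)\<^sup>2 / (2 * \<eta>)) * sqrt (1 - \<eta>) powr (- (n + \<beta> * (real n)\<^sup>2)) \<le> exp (2 * k)"
proof -
  have n: "real n > 0"
    using assms(1,2) by simp
  have \<eta>: "0 < \<eta>" "\<eta> \<le> 1/2"
    using assms(1,2) n by (auto simp: \<eta>_def field_simps)
  have "n * (\<beta> * k)\<^sup>2 / (2 * \<eta>) = (\<beta> * n)\<^sup>2 * k"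
    using n assms(1) by (simp add: \<eta>_def field_simps power2_eq_square)
  also have "\<dots> \<le> k"
    using assms(3,4) by (simp add: mult_left_le_one_le power_le_one)
  finally have first: "n * (\<beta> * k)\<^sup>2 / (2 * \<eta>) \<le> k" .
  have "- \<eta> - 2 * (\<eta> * \<eta>) \<le> ln (1 - \<eta>)"
    using ln_one_minus_pos_lower_bound[of \<eta>] \<eta> by (simp add: power2_eq_square)
  moreover have "\<eta> * \<eta> \<le> \<eta> / 2"
    using \<eta> mult_right_mono[of \<eta> "1/2" \<eta>] by simp
  ultimately have "- ln (1 - \<eta>) \<le> 2 * \<eta>"
    by linarith
  have "sqrt (1 - \<eta>) powr (- (n + \<beta> * (real n)\<^sup>2)) = exp ((n + \<beta> * (real n)\<^sup>2) / 2 * (- ln (1 - \<eta>)))"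
    using \<eta> by (simp add: powr_def ln_sqrt algebra_simps)
  also have "\<dots> \<le> exp ((n + \<beta> * (real n)\<^sup>2) / 2 * (2 * \<eta>))"
    using \<open>- ln (1 - \<eta>) \<le> 2 * \<eta>\<close> assms(3) by (intro exp_mono mult_left_mono) auto
  also have "(n + \<beta> * (real n)\<^sup>2) / 2 * (2 * \<eta>) = k * (1 + \<beta> * n) / 2"
    using n by (simp add: \<eta>_def power2_eq_square field_simps)
  also have "\<dots> \<le> k"
    using assms(4) mult_left_mono[of "1 + \<beta> * n" 2 "real k"] by simp
  finally have second: "sqrt (1 - \<eta>) powr (- (n + \<beta> * (real n)\<^sup>2)) \<le> exp k"
    by simp
  have "exp (n * (\<beta> * k)\<^sup>2 / (2 * \<eta>)) * sqrt (1 - \<eta>) powr (- (n + \<beta> * (real n)\<^sup>2)) \<le> exp k * exp k"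
    using first second by (intro mult_mono) auto
  then show ?thesis
    by (simp add: exp_add[symmetric])
qed

lemma inverse_repulsion_const_le:
  assumes "n \<ge> 1" "\<beta> * n * ln (2 * n) \<le> 1"
  shows "1 / repulsion_const n \<beta> \<le> exp (3/2)"
proof -
  have "repulsion_const n \<beta> = exp (- 1/2 - \<beta> * n * ln (2 * n))"
    using assms(1)
    by (simp add: repulsion_const_def powr_def ln_div exp_of_nat_mult[symmetric] exp_add[symmetric] algebra_simps)
  then have "1 / repulsion_const n \<beta> = exp (- (- 1/2 - \<beta> * n * ln (2 * n)))"
    by (subst exp_minus) (simp add: inverse_eq_divide)
  then show ?thesis
    using assms(2) by simp
qed

lemma fact_div_fact_le_power:
  assumes "k \<le> n"
  shows "(fact n / fact (n - k) :: real) \<le> real n ^ k"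
proof -
  have "real ((n choose k) * fact k) \<le> real (n ^ k)"
    by (simp only: of_nat_le_iff) (rule binomial_fact_pow)
  with fact_binomial[OF assms, where 'a=real] show ?thesis
    by (simp add: mult.commute)
qed

lemma edge_head_factor_le:
  fixes \<beta> B :: real
  assumes "n \<ge> 2" "ds n > 0" "\<beta> \<ge> 0" "k \<le> n" "\<forall>i<k. \<bar>x i\<bar> \<le> B"
    and "\<bar>1 / \<delta> - b_seq ds n / a_seq ds n\<bar> \<le> 1"
    and "2 * \<beta> * n * (\<bar>b_seq ds n\<bar> + B / a_seq ds n) \<le> 1"
  defines "a \<equiv> a_seq ds n" and "b \<equiv> b_seq ds n"
  shows "fact n / fact (n - k) / a ^ k *
           (\<Prod>i<k. exp (x i / \<delta>) * exp (- (1/2) * (b + x i / a)\<^sup>2) * exp (\<beta> * (n + k) * \<bar>b + x i / a\<bar>))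
         \<le> (sqrt (2 * pi) * exp (B + 1)) ^ k"
proof -
  define h where "h i = exp (x i / \<delta>) * exp (- (1/2) * (b + x i / a)\<^sup>2) * exp (\<beta> * (n + k) * \<bar>b + x i / a\<bar>)" for i
  have a: "a > 0"
    using assms(1,2) by (simp add: a_def a_seq_def)
  have h: "0 \<le> h i" "h i \<le> exp (- (1/2) * b\<^sup>2) * exp (B + 1)" if "i < k" for i
    using one_point_factor_le[OF a _ assms(6,3,4,7)[folded a_def b_def]] assms(5) that
    by (auto simp: h_def)
  have "fact n / fact (n - k) / a ^ k * (\<Prod>i<k. h i) \<le> real n ^ k / a ^ k * (\<Prod>i<k. h i)"
    using fact_div_fact_le_power[OF assms(4)] a h(1)
    by (intro mult_right_mono divide_right_mono prod_nonneg) auto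
  also have "\<dots> = (\<Prod>i<k. n / a * h i)"
    by (simp add: prod_dividef prod.distrib)
  also have "\<dots> \<le> (\<Prod>i<k. sqrt (2 * pi) * exp (B + 1))"
  proof (intro prod_mono conjI)
    fix i assume "i \<in> {..<k}"
    then have "n / a * h i \<le> n / a * exp (- (1/2) * b\<^sup>2) * exp (B + 1)"
      using h[of i] a by (auto simp: mult.assoc intro!: divide_right_mono mult_left_mono)
    also have "\<dots> \<le> sqrt (2 * pi) * exp (B + 1)"
      using mult_right_mono[OF gauss_at_b_seq_le[of n ds, OF assms(1,2)], of "exp (B + 1)"]
      by (simp add: a_def b_def)
    finally show "n / a * h i \<le> sqrt (2 * pi) * exp (B + 1)" .
    show "0 \<le> n / a * h i"
      using h a \<open>i \<in> {..<k}\<close> by simp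
  qed
  finally show ?thesis
    by (simp add: h_def)
qed

lemma corr_le_power:
  fixes \<beta> B :: real
  assumes "n \<ge> 2" "ds n > 0" "\<beta> \<ge> 0" "1 \<le> k" "k \<le> n" "\<forall>i<k. \<bar>x i\<bar> \<le> B"
    and "\<bar>1 / \<delta> - b_seq ds n / a_seq ds n\<bar> \<le> 1"
    and "2 * \<beta> * n * (\<bar>b_seq ds n\<bar> + B / a_seq ds n) \<le> 1"
    and "\<beta> * n * ln (2 * n) \<le> 1"
  shows "corr n k \<beta> (a_seq ds n) (b_seq ds n) \<delta> x \<le>
           ennreal ((sqrt (2 * pi) * exp (B + 1) * exp 2 * exp (3/2)) ^ k)"
proof -
  define \<eta> :: real where "\<eta> = k / (2 * n)"
  define H where "H = fact n / fact (n - k) / a_seq ds n ^ k * (\<Prod>i<k. exp (x i / \<delta>) *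
      exp (- (1/2) * (b_seq ds n + x i / a_seq ds n)\<^sup>2) * exp (\<beta> * (n + k) * \<bar>b_seq ds n + x i / a_seq ds n\<bar>))"
  define E where "E = exp (n * (\<beta> * k)\<^sup>2 / (2 * \<eta>)) * sqrt (1 - \<eta>) powr (- (n + \<beta> * (real n)\<^sup>2))"
  define c where "c = repulsion_const n \<beta>"
  have a: "a_seq ds n > 0"
    using assms(1,2) by (simp add: a_seq_def)
  have \<eta>: "0 < \<eta>" "\<eta> < 1"
    using assms(4,5) by (auto simp: \<eta>_def field_simps)
  have "1 \<le> ln (2 * real n)"
    using assms(1) exp_le ln_ge_iff[of "2 * real n" 1] by auto
  then have "\<beta> * n \<le> 1"
    using assms(3,9) mult_left_mono[of 1 "ln (2 * real n)" "\<beta> * n"] by simp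
  then have E: "E \<le> exp 2 ^ k"
    using tilt_const_le[OF assms(4,5,3)] by (simp add: E_def \<eta>_def exp_of_nat_mult[symmetric] mult.commute)
  have c: "c > 0" "1 / c ^ k \<le> exp (3/2) ^ k"
    using inverse_repulsion_const_le[of n \<beta>] repulsion_const_pos[of n \<beta>] assms(1,9)
    by (auto simp: c_def power_one_over[symmetric] intro!: power_mono)
  have "corr n k \<beta> (a_seq ds n) (b_seq ds n) \<delta> x \<le> ennreal (H * E * (1 / c ^ k))"
    using corr_le[OF assms(5) a assms(3) \<eta>, of "b_seq ds n" \<delta> x]
    by (simp add: H_def E_def c_def of_nat_add mult.assoc)
  also have "\<dots> \<le> ennreal ((sqrt (2 * pi) * exp (B + 1)) ^ k * exp 2 ^ k * exp (3/2) ^ k)"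
    using edge_head_factor_le[OF assms(1,2,3,5,6,7,8)] E c a
    by (intro ennreal_leI mult_mono) (auto simp: H_def E_def intro!: prod_nonneg)
  finally show ?thesis
    by (simp add: power_mult_distrib)
qed

lemma tendsto_mult_ln_ratio:
  fixes \<beta> g :: "nat \<Rightarrow> real"
  assumes "(\<lambda>n. real n * ln (real n) * \<beta> n) \<longlonglongrightarrow> 0" "(\<lambda>n. g n / ln (real n)) \<longlonglongrightarrow> c"
  shows "(\<lambda>n. \<beta> n * n * g n) \<longlonglongrightarrow> 0"
proof -
  have "(\<lambda>n. real n * ln (real n) * \<beta> n * (g n / ln (real n))) \<longlonglongrightarrow> 0 * c"
    by (intro tendsto_mult assms)
  moreover have "\<forall>\<^sub>F n in sequentially. real n * ln (real n) * \<beta> n * (g n / ln (real n)) = \<beta> n * n * g n"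
    using eventually_ge_at_top[of 2] by eventually_elim simp
  ultimately show ?thesis
    by (simp add: tendsto_cong)
qed

lemma tendsto_b_seq_div_ln:
  assumes "ds \<longlonglongrightarrow> \<delta>" "\<delta> > 0"
  shows "(\<lambda>n. b_seq ds n / ln (real n)) \<longlonglongrightarrow> 0"
proof -
  define r where "r n = 1 / (2 * ln (real n) * sqrt (2 * ln (real n)))" for n :: nat
  have "(\<lambda>n. sqrt (2 * ln (real n)) / ln (real n)) \<longlonglongrightarrow> 0"
    by real_asymp
  moreover have "(\<lambda>n. ln (ln (real n)) * r n) \<longlonglongrightarrow> 0"
    unfolding r_def by real_asymp
  moreover have "r \<longlonglongrightarrow> 0"
    unfolding r_def by real_asymp
  ultimately have "(\<lambda>n. sqrt (2 * ln (real n)) / ln (real n) - ln (ln (real n)) * r n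
            - (2 * ln (ds n) + ln (4 * pi)) * r n) \<longlonglongrightarrow> 0 - 0 - (2 * ln \<delta> + ln (4 * pi)) * 0"
    using tendsto_ln[OF assms(1)] assms by (intro tendsto_intros) auto
  moreover have "b_seq ds n / ln (real n) = sqrt (2 * ln (real n)) / ln (real n) - ln (ln (real n)) * r n
                   - (2 * ln (ds n) + ln (4 * pi)) * r n" for n
    by (simp add: b_seq_def r_def diff_divide_distrib add_divide_distrib algebra_simps)
  ultimately show ?thesis
    by simp
qed

lemma tendsto_b_seq_div_a_seq:
  assumes "ds \<longlonglongrightarrow> \<delta>" "\<delta> > 0"
  shows "(\<lambda>n. b_seq ds n / a_seq ds n) \<longlonglongrightarrow> 1 / \<delta>"
proof -
  have "(\<lambda>n. 1 / ds n * (1 - (ln (ln (real n)) / ln (real n) + (2 * ln (ds n) + ln (4 * pi)) * (1 / ln (real n))) / 4))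
          \<longlonglongrightarrow> 1 / \<delta> * (1 - (0 + (2 * ln \<delta> + ln (4 * pi)) * 0) / 4)"
    using tendsto_ln[OF assms(1)] assms
    by (intro tendsto_intros) (real_asymp | simp)+
  moreover have "\<forall>\<^sub>F n in sequentially. b_seq ds n / a_seq ds n =
      1 / ds n * (1 - (ln (ln (real n)) / ln (real n) + (2 * ln (ds n) + ln (4 * pi)) * (1 / ln (real n))) / 4)"
    using eventually_ge_at_top[of 2]
  proof eventually_elim
    case (elim n)
    then have L: "ln (real n) > 0" by simp
    then have "sqrt (2 * ln (real n)) * sqrt (2 * ln (real n)) = 2 * ln (real n)" by simp
    with L show ?case
      by (simp add: a_seq_def b_seq_def field_simps)
  qed
  ultimately show ?thesis
    by (simp add: tendsto_cong)
qed

lemma eventually_edge_scaling_conditions: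
  fixes \<beta> ds :: "nat \<Rightarrow> real" and B \<delta> :: real
  assumes "\<forall>n. \<beta> n \<ge> 0" "(\<lambda>n. real n * ln (real n) * \<beta> n) \<longlonglongrightarrow> 0" "ds \<longlonglongrightarrow> \<delta>" "\<delta> > 0"
  shows "\<forall>\<^sub>F n in sequentially. 2 \<le> n \<and> ds n > 0 \<and> \<bar>1 / \<delta> - b_seq ds n / a_seq ds n\<bar> \<le> 1 \<and>
           2 * \<beta> n * n * (\<bar>b_seq ds n\<bar> + B / a_seq ds n) \<le> 1 \<and> \<beta> n * n * ln (2 * n) \<le> 1"
proof -
  have "(\<lambda>n. 1 / ln (real n)) \<longlonglongrightarrow> 0" "(\<lambda>n. ln (2 * real n) / ln (real n)) \<longlonglongrightarrow> 1"
    by real_asymp+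
  then have \<beta>n: "(\<lambda>n. \<beta> n * n) \<longlonglongrightarrow> 0" and \<beta>n_ln: "(\<lambda>n. \<beta> n * n * ln (2 * n)) \<longlonglongrightarrow> 0"
    using tendsto_mult_ln_ratio[OF assms(2)] by fastforce+
  have \<beta>n_b: "(\<lambda>n. \<beta> n * n * b_seq ds n) \<longlonglongrightarrow> 0"
    by (rule tendsto_mult_ln_ratio[OF assms(2) tendsto_b_seq_div_ln[OF assms(3,4)]])
  have "(\<lambda>n. 1 / ds n * (1 / sqrt (2 * ln (real n)))) \<longlonglongrightarrow> 1 / \<delta> * 0"
    using assms(3,4) by (intro tendsto_intros) (real_asymp | simp)+
  then have inv_a: "(\<lambda>n. 1 / a_seq ds n) \<longlonglongrightarrow> 0"
    by (simp add: a_seq_def)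
  have "(\<lambda>n. 2 * (\<bar>\<beta> n * n * b_seq ds n\<bar> + \<beta> n * n * B * (1 / a_seq ds n))) \<longlonglongrightarrow> 2 * (\<bar>0\<bar> + 0 * B * 0)"
    by (intro \<beta>n \<beta>n_b inv_a tendsto_mult tendsto_add tendsto_rabs tendsto_const)
  then have "\<forall>\<^sub>F n in sequentially. 2 * \<beta> n * n * (\<bar>b_seq ds n\<bar> + B / a_seq ds n) < 1"
    using assms(1) by (auto simp: a_seq_def abs_mult algebra_simps elim!: eventually_mono dest!: order_tendstoD(2)[of _ 0 _ 1])
  moreover have "\<forall>\<^sub>F n in sequentially. \<bar>1 / \<delta> - b_seq ds n / a_seq ds n\<bar> < 1"
    using tendsto_b_seq_div_a_seq[OF assms(3,4)] by (auto simp: tendsto_iff dist_real_def abs_minus_commute)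
  moreover have "\<forall>\<^sub>F n in sequentially. \<beta> n * n * ln (2 * n) < 1"
    using order_tendstoD(2)[OF \<beta>n_ln] by simp
  ultimately show ?thesis
    using eventually_ge_at_top[of 2] order_tendstoD(1)[OF assms(3,4)]
    by eventually_elim auto
qed

theorem lemma3p6:
  fixes \<beta> ds :: "nat \<Rightarrow> real" and \<delta> :: real and K :: "real set"
  assumes "\<forall>n. \<beta> n \<ge> 0"
    and "(\<lambda>n. real n * ln (real n) * \<beta> n) \<longlonglongrightarrow> 0"
    and "ds \<longlonglongrightarrow> \<delta>" and "\<delta> > 0"
    and "compact K"
  shows "\<exists>\<Theta>>0. \<forall>\<^sub>F n in sequentially. \<forall>k. 1 \<le> k \<and> k \<le> n \<longrightarrow>
           (\<forall>x. (\<forall>i<k. x i \<in> K) \<longrightarrow>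
              corr n k (\<beta> n) (a_seq ds n) (b_seq ds n) \<delta> x \<le> ennreal (\<Theta> ^ k))"
proof -
  obtain B where B: "\<forall>x\<in>K. \<bar>x\<bar> \<le> B"
    using compact_imp_bounded[OF assms(5)] unfolding bounded_real by blast
  define \<Theta> where "\<Theta> = sqrt (2 * pi) * exp (B + 1) * exp 2 * exp (3/2)"
  have "\<forall>\<^sub>F n in sequentially. \<forall>k. 1 \<le> k \<and> k \<le> n \<longrightarrow>
           (\<forall>x. (\<forall>i<k. x i \<in> K) \<longrightarrow>
              corr n k (\<beta> n) (a_seq ds n) (b_seq ds n) \<delta> x \<le> ennreal (\<Theta> ^ k))"
    using eventually_edge_scaling_conditions[OF assms(1-4), of B]
    by eventually_elim (use B assms(1) in \<open>auto simp: \<Theta>_def intro!: corr_le_power\<close>)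
  moreover have "\<Theta> > 0"
    by (simp add: \<Theta>_def)
  ultimately show ?thesis
    by blast
qed

end
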